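(* Let $\tau$ be a full binary tree with survivals with parameters $p_0,p_1,p_2,q_0,q_1,q_2$, rooted at a type 1 vertex, such that $\mathbb P(\Vert\tau\Vert<\infty)=1$. Let $D_1$ and $D_2$ be the numbers of type 1 (left) and type 2 (right) fathers in $\tau$, the root counted as a left father when it has two children. Set $$P=\frac{p_0}{p_0+p_2},\qquad Q=\frac{q_0}{q_0+q_2}.$$ Then for all integers $n\geq1$ and $m\geq 0$, $$\mathbb P(D_1=n,\,D_2=m)=N(n+m,m+1)\,P^{m+1}(1-P)^{n}\,Q^{n}(1-Q)^{m},$$ i.e. the likelihood of $(P,Q)$ given $n$ left fathers and $m$ right fathers is $\mathscr L(P,Q\mid n,m)=N(n+m,m+1)P^{m+1}(1-P)^nQ^n(1-Q)^m$.
   Context: A full binary tree with survivals is a two-type Galton–Watson tree (types $1,2$; each vertex of type $j$ independently has $\alpha_1$ children of type 1 and $\alpha_2$ children of type 2 with probability $\mu^{(j)}(\alpha_1,\alpha_2)$, children ordered by type, so that of two siblings the left one has type 1 and the right one type 2) with offspring distribution $\mu^{(1)}(0,0)=p_0$, $\mu^{(1)}(1,0)=p_1$, $\mu^{(1)}(1,1)=p_2$, $\mu^{(2)}(0,0)=q_0$, $\mu^{(2)}(0,1)=q_1$, $\mu^{(2)}(1,1)=q_2$, where $p_0,p_1,p_2,q_0,q_1,q_2\in(0,1)$ and $p_0+p_1+p_2=q_0+q_1+q_2=1$. A father is a vertex with two children. $\Vert\tau\Vert$ is the number of edges of $\tau$. Narayana numbers: $N(n,k)=\frac1n\binom nk\binom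 n{k-1}$ for $n\geq1$, $1\le k\le n$. *)

theory Defs
  imports "HOL-Analysis.Analysis"
begin

text \<open>Vertex types are
determined by position: the root has type 1, the only child of a vertex with one
child has the type of its parent (children of type j vertex are (1,0) for j=1,
(0,1) for j=2), and of two siblings the left one has type 1 and the right one type 2.\<close>

datatype btree_s = Leaf | Unary btree_s | Binary btree_s btree_s

datatype vtype = T1 | T2

text \<open>Probability that the two-type Galton--Watson tree started from a vertex of the
given type equals the given finite tree (product of offspring probabilities).\<close>
fun gw_weight :: "real \<Rightarrow> real \<Rightarrow> real \<Rightarrow> real \<Rightarrow> real \<Rightarrow> real \<Rightarrow> vtype \<Rightarrow> btree_s \<Rightarrow> real" where
  "gw_weight p0 p1 p2 q0 q1 q2 T1 Leaf = p0"
| "gw_weight p0 p1 p2 q0 q1 q2 T1 (Unary t) = p1 * gw_weight p0 p1 p2 q0 q1 q2 T1 t"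
| "gw_weight p0 p1 p2 q0 q1 q2 T1 (Binary l r) =
     p2 * gw_weight p0 p1 p2 q0 q1 q2 T1 l * gw_weight p0 p1 p2 q0 q1 q2 T2 r"
| "gw_weight p0 p1 p2 q0 q1 q2 T2 Leaf = q0"
| "gw_weight p0 p1 p2 q0 q1 q2 T2 (Unary t) = q1 * gw_weight p0 p1 p2 q0 q1 q2 T2 t"
| "gw_weight p0 p1 p2 q0 q1 q2 T2 (Binary l r) =
     q2 * gw_weight p0 p1 p2 q0 q1 q2 T1 l * gw_weight p0 p1 p2 q0 q1 q2 T2 r"

fun fathers :: "vtype \<Rightarrow> vtype \<Rightarrow> btree_s \<Rightarrow> nat" where
  "fathers j ty Leaf = 0"
| "fathers j ty (Unary t) = fathers j ty t"
| "fathers j ty (Binary l r) =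
     (if ty = j then 1 else 0) + fathers j T1 l + fathers j T2 r"

definition narayana :: "nat \<Rightarrow> nat \<Rightarrow> real" where
  "narayana n k = real (n choose k) * real (n choose (k - 1)) / real n"

end

theory Submission
  imports Defs
begin

text \<open>Cutting out unary vertices turns a run of k unary vertices below a type-j vertex into a
factor p1^k (resp. q1^k); summing these geometric series leaves a tree in which every vertex
has 0 or 2 children and a type-1 (type-2) vertex is a leaf with probability P (Q) and a father
with probability 1 - P (1 - Q).  Since every father has one child of each type, a forest of
such trees with r type-1 roots, s type-2 roots, n type-1 fathers and m type-2 fathers has
r + m type-1 leaves and s + n type-2 leaves, so its weight is P^(r+m) (1-P)^n Q^(s+n) (1-Q)^m.
The number of such forests satisfies the recurrence obtained by deleting the first root, and
is solved by the closed form of two-type Lagrange inversion; for a single type-1 root it is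
the Narayana number N(n+m, m+1).\<close>

text \<open>The case split only matters when \<open>r + n + m = 0\<close> or \<open>s + n + m = 0\<close>: the closed form
  then reads \<open>0 / 0\<close>, although exactly one forest (all roots leaves) is counted.\<close>

definition forest_coeff :: "nat \<Rightarrow> nat \<Rightarrow> nat \<Rightarrow> nat \<Rightarrow> real" where
  "forest_coeff r s n m = (if n = 0 \<and> m = 0 then 1 else
     real ((r + n + m) choose n) * real ((s + n + m) choose m) * real (r * s + r * n + s * m)
       / (real (r + n + m) * real (s + n + m)))"

lemma forest_coeff_eq:
  assumes "r + n + m > 0" "s + n + m > 0"
  shows "forest_coeff r s n m =
     real ((r + n + m) choose n) * real ((s + n + m) choose m) * real (r * s + r * n + s * m)
       / (real (r + n + m) * real (s + n + m))"
  using assms by (auto simp: forest_coeff_def)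

lemma forest_coeff_swap: "forest_coeff r s n m = forest_coeff s r m n"
  unfolding forest_coeff_def by (auto simp: algebra_simps)

lemma forest_coeff_0_0: "forest_coeff 0 0 n m = (if n = 0 \<and> m = 0 then 1 else 0)"
  unfolding forest_coeff_def by auto

lemma forest_coeff_0_left:
  assumes "m > 0"
  shows "forest_coeff r s 0 m = real ((s + m) choose m) * real s / real (s + m)"
proof -
  have "real (r * s + s * m) = real (r + m) * real s"
    by (simp add: algebra_simps)
  then show ?thesis
    using assms by (simp add: forest_coeff_def)
qed

lemma forest_coeff_Suc_left:
  "forest_coeff (Suc r) s n m =
     forest_coeff r s n m + (if n \<ge> 1 then forest_coeff (Suc r) (Suc s) (n - 1) m else 0)"
proof (cases n)
  case 0
  then show ?thesis
    by (cases "m = 0") (simp_all add: forest_coeff_0_left, simp add: forest_coeff_def)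
next
  case (Suc k)
  define N where "N = r + n + m"
  define S where "S = s + n + m"
  define a where "a = real (Suc r * s + Suc r * n + s * m)"
  define b where "b = real (r * s + r * n + s * m)"
  define c where "c = real (Suc r * Suc s + Suc r * k + Suc s * m)"
  define Z where "Z = real (S choose m)"
  have pos: "real N > 0" "real S > 0"
    using Suc by (simp_all add: N_def S_def)
  have "Suc N - n = Suc r + m"
    by (simp add: N_def)
  then have "(Suc r + m) * (Suc N choose n) = Suc N * (N choose n)"
    using binomial_absorb_comp[of "Suc N" n] by simp
  then have absorb: "real (Suc r + m) * real (Suc N choose n) = real (Suc N) * real (N choose n)"
    by (metis of_nat_mult)
  have "n * (Suc N choose n) = Suc N * (N choose k)"
    using Suc_times_binomial[of k N] by (simp add: Suc)
  then have absorb': "real n * real (Suc N choose n) = real (Suc N) * real (N choose k)"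
    by (metis of_nat_mult)
  have coeff: "forest_coeff r s n m = real (N choose n) * Z * b / (real N * real S)"
    using Suc by (simp add: forest_coeff_eq b_def Z_def N_def S_def)
  have "Suc r + k + m = N" "Suc s + k + m = S"
    by (simp_all add: N_def S_def Suc)
  then have coeff':
      "forest_coeff (Suc r) (Suc s) k m = real (N choose k) * Z * c / (real N * real S)"
    by (simp add: forest_coeff_eq c_def Z_def)
  have key: "a * real N = real (Suc r + m) * b + real n * c"
    unfolding a_def b_def c_def N_def Suc by (simp add: algebra_simps)
  have "forest_coeff (Suc r) s n m * (real (Suc N) * real N * real S)
      = real (Suc N choose n) * Z * (a * real N)"
    using pos Suc by (simp add: forest_coeff_eq a_def Z_def N_def S_def)
  also have "\<dots> = Z * b * (real (Suc r + m) * real (Suc N choose n))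
      + Z * c * (real n * real (Suc N choose n))"
    unfolding key by (simp add: algebra_simps)
  also have "\<dots> = (real (N choose n) * Z * b + real (N choose k) * Z * c) * real (Suc N)"
    unfolding absorb absorb' by (simp add: algebra_simps)
  also have "\<dots> = (forest_coeff r s n m + forest_coeff (Suc r) (Suc s) k m)
      * (real (Suc N) * real N * real S)"
    using pos unfolding coeff coeff' by (simp add: field_simps)
  finally show ?thesis
    using pos Suc by simp
qed

lemma forest_coeff_Suc_right:
  "forest_coeff r (Suc s) n m =
     forest_coeff r s n m + (if m \<ge> 1 then forest_coeff (Suc r) (Suc s) n (m - 1) else 0)"
  using forest_coeff_Suc_left[of s r m n]
  by (simp add: forest_coeff_swap[of r] forest_coeff_swap[of "Suc r"])

lemma forest_coeff_1_0:
  assumes "n \<ge> 1"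
  shows "forest_coeff 1 0 n m = narayana (n + m) (m + 1)"
proof -
  obtain k where n: "n = Suc k"
    using assms by (cases n) auto
  have "n * (Suc (n + m) choose n) = Suc (n + m) * ((n + m) choose (m + 1))"
    using Suc_times_binomial[of k "n + m"] binomial_symmetric[of k "n + m"] by (simp add: n)
  then have e: "real n * real (Suc (n + m) choose n)
      = real (Suc (n + m)) * real ((n + m) choose (m + 1))"
    by (metis of_nat_mult)
  have "forest_coeff 1 0 n m
      = real n * real (Suc (n + m) choose n) * real ((n + m) choose m)
        / (real (Suc (n + m)) * real (n + m))"
    using assms by (simp add: forest_coeff_eq algebra_simps)
  also have "\<dots> = real ((n + m) choose (m + 1)) * real ((n + m) choose m) / real (n + m)"
    unfolding e by (simp del: of_nat_Suc)
  finally show ?thesis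
    by (simp add: narayana_def)
qed

fun unary_depth :: "btree_s \<Rightarrow> nat" where
  "unary_depth (Unary t) = Suc (unary_depth t)"
| "unary_depth Leaf = 0"
| "unary_depth (Binary l r) = 0"

fun strip_unary :: "btree_s \<Rightarrow> btree_s" where
  "strip_unary (Unary t) = strip_unary t"
| "strip_unary Leaf = Leaf"
| "strip_unary (Binary l r) = Binary l r"

lemma funpow_Unary_strip_unary: "(Unary ^^ unary_depth t) (strip_unary t) = t"
  by (induction t) auto

lemma unary_depth_strip_unary: "unary_depth (strip_unary t) = 0"
  by (induction t) auto

lemma unary_depth_funpow_Unary: "unary_depth t = 0 \<Longrightarrow> unary_depth ((Unary ^^ k) t) = k"
  by (induction k) auto

lemma strip_unary_funpow_Unary: "unary_depth t = 0 \<Longrightarrow> strip_unary ((Unary ^^ k) t) = t"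
  by (induction k) (auto elim: unary_depth.elims)

lemma fathers_funpow_Unary: "fathers j w ((Unary ^^ k) t) = fathers j w t"
  by (induction k) auto

lemma fathers_strip_unary: "fathers j w (strip_unary t) = fathers j w t"
  by (induction t) auto

lemma gw_weight_nonneg:
  assumes "0 \<le> p0" "0 \<le> p1" "0 \<le> p2" "0 \<le> q0" "0 \<le> q1" "0 \<le> q2"
  shows "gw_weight p0 p1 p2 q0 q1 q2 w t \<ge> 0"
  by (induction t arbitrary: w) (case_tac w; use assms in auto)+

definition forest_weight :: "(vtype \<Rightarrow> btree_s \<Rightarrow> real) \<Rightarrow> vtype list \<Rightarrow> btree_s list \<Rightarrow> real" where
  "forest_weight G ws ts = (\<Prod>(w, t)\<leftarrow>zip ws ts. G w t)"

definition forest_fathers :: "vtype \<Rightarrow> vtype list \<Rightarrow> btree_s list \<Rightarrow> nat" where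
  "forest_fathers j ws ts = (\<Sum>(w, t)\<leftarrow>zip ws ts. fathers j w t)"

definition forests :: "vtype list \<Rightarrow> nat \<Rightarrow> nat \<Rightarrow> btree_s list set" where
  "forests ws n m =
     {ts. length ts = length ws \<and> forest_fathers T1 ws ts = n \<and> forest_fathers T2 ws ts = m}"

lemma forest_weight_Nil [simp]: "forest_weight G [] ts = 1"
  by (simp add: forest_weight_def)

lemma forest_fathers_Nil [simp]: "forest_fathers j [] ts = 0"
  by (simp add: forest_fathers_def)

lemma forest_weight_Cons [simp]:
  "forest_weight G (w # ws) (t # ts) = G w t * forest_weight G ws ts"
  by (simp add: forest_weight_def)

lemma forest_fathers_Cons [simp]:
  "forest_fathers j (w # ws) (t # ts) = fathers j w t + forest_fathers j ws ts"
  by (simp add: forest_fathers_def)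

lemma forest_weight_nonneg: "(\<And>w t. G w t \<ge> 0) \<Longrightarrow> forest_weight G ws ts \<ge> 0"
  unfolding forest_weight_def by (rule prod_list_nonneg) auto

lemma forests_Nil: "forests [] n m = (if n = 0 \<and> m = 0 then {[]} else {})"
  by (auto simp: forests_def)

lemma mem_forests_Cons:
  "a \<in> forests (w # ws) n m \<longleftrightarrow> (\<exists>t ts. a = t # ts \<and> length ts = length ws \<and>
     fathers T1 w t + forest_fathers T1 ws ts = n \<and> fathers T2 w t + forest_fathers T2 ws ts = m)"
  by (cases a) (auto simp: forests_def)

fun graft :: "btree_s list \<Rightarrow> btree_s list" where
  "graft (l # r # ts) = Binary l r # ts"
| "graft ts = ts"

lemma graft_eq_Cons_Cons:
  "length ts \<ge> 2 \<Longrightarrow> \<exists>l r us. ts = l # r # us \<and> graft ts = Binary l r # us"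
  by (cases ts rule: graft.cases) auto

lemma forests_Cons_Cons_elem:
  assumes "ts \<in> forests (v # v' # ws) n m"
  obtains l r us where "ts = l # r # us"
  using assms by (cases ts rule: graft.cases) (auto simp: forests_def)

lemma inj_on_graft: "inj_on graft {ts. length ts \<ge> 2}"
  by (rule inj_onI) (auto dest!: graft_eq_Cons_Cons)

lemma forests_first_not_unary:
  "{ts \<in> forests (w # ws) n m. unary_depth (hd ts) = 0} =
     (#) Leaf ` forests ws n m \<union>
     (if of_bool (w = T1) \<le> n \<and> of_bool (w = T2) \<le> m
      then graft ` forests (T1 # T2 # ws) (n - of_bool (w = T1)) (m - of_bool (w = T2)) else {})"
  (is "?core = ?leaf \<union> ?father")
proof
  show "?core \<subseteq> ?leaf \<union> ?father"
  proof
    fix a assume "a \<in> ?core"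
    then obtain t ts where a: "a = t # ts" "t # ts \<in> forests (w # ws) n m" "unary_depth t = 0"
      by (auto simp: mem_forests_Cons)
    show "a \<in> ?leaf \<union> ?father"
    proof (cases t)
      case Leaf
      then show ?thesis
        using a by (auto simp: forests_def)
    next
      case (Binary l r)
      then have "l # r # ts \<in> forests (T1 # T2 # ws) (n - of_bool (w = T1)) (m - of_bool (w = T2))"
        and le: "of_bool (w = T1) \<le> n" "of_bool (w = T2) \<le> m"
        using a by (auto simp: forests_def)
      moreover have "a = graft (l # r # ts)"
        using a Binary by simp
      ultimately have
          "a \<in> graft ` forests (T1 # T2 # ws) (n - of_bool (w = T1)) (m - of_bool (w = T2))"
        by blast
      then show ?thesis
        by (simp only: le simp_thms if_True UnI2)
    qed (use a in simp)
  qed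
  show "?leaf \<union> ?father \<subseteq> ?core"
    by (auto simp: forests_def length_Suc_conv split: if_splits)
qed

lemma has_sum_geometric:
  fixes z :: "'a :: {real_normed_field, banach}"
  assumes "norm z < 1"
  shows "((\<lambda>k. z ^ k) has_sum 1 / (1 - z)) UNIV"
  using assms by (intro norm_summable_imp_has_sum geometric_sums) (auto simp: norm_power)

locale gw_offspring =
  fixes p0 p1 p2 q0 q1 q2 :: real
  assumes nonneg: "0 \<le> p0" "0 \<le> p1" "0 \<le> p2" "0 \<le> q0" "0 \<le> q1" "0 \<le> q2"
    and not_always_unary: "p1 < 1" "q1 < 1"
    and sum_p: "p0 + p1 + p2 = 1" and sum_q: "q0 + q1 + q2 = 1"
begin

abbreviation gw :: "vtype \<Rightarrow> btree_s \<Rightarrow> real" where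
  "gw \<equiv> gw_weight p0 p1 p2 q0 q1 q2"

definition leaf_prob :: "vtype \<Rightarrow> real" where
  "leaf_prob w = (if w = T1 then p0 else q0)"

definition unary_prob :: "vtype \<Rightarrow> real" where
  "unary_prob w = (if w = T1 then p1 else q1)"

definition father_prob :: "vtype \<Rightarrow> real" where
  "father_prob w = (if w = T1 then p2 else q2)"

lemma gw_eqs:
  "gw w Leaf = leaf_prob w"
  "gw w (Unary t) = unary_prob w * gw w t"
  "gw w (Binary l r) = father_prob w * gw T1 l * gw T2 r"
  by (cases w; simp add: leaf_prob_def unary_prob_def father_prob_def)+

lemma gw_funpow_Unary: "gw w ((Unary ^^ k) t) = unary_prob w ^ k * gw w t"
  by (induction k) (simp_all add: gw_eqs)

lemma forest_weight_gw_nonneg: "forest_weight gw ws ts \<ge> 0"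
  using nonneg by (intro forest_weight_nonneg gw_weight_nonneg) auto

lemma has_sum_forests_first_not_unary:
  assumes V: "(forest_weight gw ws has_sum V) (forests ws n m)"
    and V': "of_bool (w = T1) \<le> n \<Longrightarrow> of_bool (w = T2) \<le> m \<Longrightarrow>
      (forest_weight gw (T1 # T2 # ws) has_sum V')
        (forests (T1 # T2 # ws) (n - of_bool (w = T1)) (m - of_bool (w = T2)))"
  shows "(forest_weight gw (w # ws) has_sum
      leaf_prob w * V
      + (if of_bool (w = T1) \<le> n \<and> of_bool (w = T2) \<le> m then father_prob w * V' else 0))
      {ts \<in> forests (w # ws) n m. unary_depth (hd ts) = 0}"
proof -
  let ?fathers = "forests (T1 # T2 # ws) (n - of_bool (w = T1)) (m - of_bool (w = T2))"
  let ?cond = "of_bool (w = T1) \<le> n \<and> of_bool (w = T2) \<le> m"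
  have "forest_weight gw (w # ws) \<circ> (#) Leaf = (\<lambda>ts. leaf_prob w * forest_weight gw ws ts)"
    by (simp add: fun_eq_iff gw_eqs)
  then have leaf: "(forest_weight gw (w # ws) has_sum leaf_prob w * V) ((#) Leaf ` forests ws n m)"
    using has_sum_cmult_right[OF V] by (simp add: has_sum_reindex)
  have graft_inj: "inj_on graft ?fathers"
    by (rule inj_on_subset[OF inj_on_graft]) (auto simp: forests_def)
  have father: "(forest_weight gw (w # ws) has_sum (if ?cond then father_prob w * V' else 0))
      (if ?cond then graft ` ?fathers else {})"
  proof (cases ?cond)
    case True
    have weight_graft:
        "forest_weight gw (w # ws) (graft ts) = father_prob w * forest_weight gw (T1 # T2 # ws) ts"
      if fathers: "ts \<in> ?fathers" for ts
    proof -
      obtain l r us where "ts = l # r # us"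
        using fathers by (rule forests_Cons_Cons_elem)
      then show ?thesis
        by (simp add: gw_eqs)
    qed
    have "((\<lambda>ts. father_prob w * forest_weight gw (T1 # T2 # ws) ts) has_sum father_prob w * V')
        ?fathers"
      using V' True by (intro has_sum_cmult_right) auto
    then have "(forest_weight gw (w # ws) \<circ> graft has_sum father_prob w * V') ?fathers"
      by (rule has_sum_cong[THEN iffD1, rotated]) (simp add: weight_graft)
    then show ?thesis
      using True graft_inj by (simp add: has_sum_reindex)
  qed (simp only: if_False has_sum_empty)
  have "(#) Leaf ` forests ws n m \<inter> (if ?cond then graft ` ?fathers else {}) = {}"
    by (auto elim: forests_Cons_Cons_elem)
  then show ?thesis
    unfolding forests_first_not_unary by (rule has_sum_Un_disjoint[OF leaf father])
qed

lemma has_sum_forests_unary_chains: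
  assumes core:
    "(forest_weight gw (w # ws) has_sum S) {ts \<in> forests (w # ws) n m. unary_depth (hd ts) = 0}"
  shows "(forest_weight gw (w # ws) has_sum S / (1 - unary_prob w)) (forests (w # ws) n m)"
proof -
  let ?core = "{ts \<in> forests (w # ws) n m. unary_depth (hd ts) = 0}"
  define f where "f = (\<lambda>(ts, k). unary_prob w ^ k * forest_weight gw (w # ws) ts)"
  define grow where "grow = (\<lambda>(ts, k). (Unary ^^ k) (hd ts) # tl ts)"
  define cut where "cut = (\<lambda>ts. (strip_unary (hd ts) # tl ts, unary_depth (hd ts)))"
  have u: "0 \<le> unary_prob w" "unary_prob w < 1"
    using nonneg not_always_unary by (auto simp: unary_prob_def)
  have chains: "((\<lambda>k. f (ts, k)) has_sum forest_weight gw (w # ws) ts / (1 - unary_prob w)) UNIV"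
    for ts
    using has_sum_cmult_left[OF has_sum_geometric[of "unary_prob w"],
        of "forest_weight gw (w # ws) ts"] u
    by (simp add: f_def)
  have total:
    "((\<lambda>ts. forest_weight gw (w # ws) ts / (1 - unary_prob w)) has_sum S / (1 - unary_prob w)) ?core"
    using core by (rule has_sum_divide_const)
  have "f summable_on ?core \<times> UNIV"
    using u forest_weight_gw_nonneg
    by (intro summable_on_SigmaI[OF chains has_sum_imp_summable[OF total]]) (auto simp: f_def)
  then have "(f has_sum S / (1 - unary_prob w)) (?core \<times> UNIV)"
    by (rule has_sum_SigmaI[OF chains total])
  also have "?this \<longleftrightarrow>
      (forest_weight gw (w # ws) has_sum S / (1 - unary_prob w)) (forests (w # ws) n m)"
  proof (rule has_sum_reindex_bij_witness[where j = grow and i = cut])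
    fix a assume "a \<in> ?core \<times> (UNIV :: nat set)"
    then obtain t ts k
      where a: "a = (t # ts, k)" "t # ts \<in> forests (w # ws) n m" "unary_depth t = 0"
      by (auto simp: mem_forests_Cons)
    then show "cut (grow a) = a"
      by (simp add: cut_def grow_def strip_unary_funpow_Unary unary_depth_funpow_Unary)
    show "grow a \<in> forests (w # ws) n m"
      using a by (simp add: grow_def forests_def fathers_funpow_Unary)
    show "forest_weight gw (w # ws) (grow a) = f a"
      using a by (simp add: grow_def f_def gw_funpow_Unary)
  next
    fix b assume "b \<in> forests (w # ws) n m"
    then obtain t ts where b: "b = t # ts" "t # ts \<in> forests (w # ws) n m"
      by (auto simp: mem_forests_Cons)
    then show "grow (cut b) = b"
      by (simp add: grow_def cut_def funpow_Unary_strip_unary)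
    show "cut b \<in> ?core \<times> UNIV"
      using b by (simp add: cut_def forests_def fathers_strip_unary unary_depth_strip_unary)
  qed simp
  finally show ?thesis .
qed

definition reduced_leaf_prob :: "vtype \<Rightarrow> real" where
  "reduced_leaf_prob w = leaf_prob w / (leaf_prob w + father_prob w)"

lemma reduced_leaf_prob_simps:
  "reduced_leaf_prob T1 = p0 / (p0 + p2)"
  "reduced_leaf_prob T2 = q0 / (q0 + q2)"
  by (simp_all add: reduced_leaf_prob_def leaf_prob_def father_prob_def)

definition forest_mass :: "vtype list \<Rightarrow> nat \<Rightarrow> nat \<Rightarrow> real" where
  "forest_mass ws n m =
     forest_coeff (count_list ws T1) (count_list ws T2) n m
     * reduced_leaf_prob T1 ^ (count_list ws T1 + m) * (1 - reduced_leaf_prob T1) ^ n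
     * reduced_leaf_prob T2 ^ (count_list ws T2 + n) * (1 - reduced_leaf_prob T2) ^ m"

lemma conditional_probs:
  "leaf_prob w / (1 - unary_prob w) = reduced_leaf_prob w"
  "father_prob w / (1 - unary_prob w) = 1 - reduced_leaf_prob w"
proof -
  have sums: "1 - unary_prob w = leaf_prob w + father_prob w"
    using sum_p sum_q by (simp add: leaf_prob_def unary_prob_def father_prob_def)
  moreover have "1 - unary_prob w > 0"
    using not_always_unary by (simp add: unary_prob_def)
  ultimately show "leaf_prob w / (1 - unary_prob w) = reduced_leaf_prob w"
    "father_prob w / (1 - unary_prob w) = 1 - reduced_leaf_prob w"
    by (simp_all add: reduced_leaf_prob_def field_simps)
qed

lemma forest_mass_Cons_T1:
  "reduced_leaf_prob T1 * forest_mass ws n m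
     + (if n \<ge> 1 then (1 - reduced_leaf_prob T1) * forest_mass (T1 # T2 # ws) (n - 1) m else 0)
     = forest_mass (T1 # ws) n m"
proof -
  define r where "r = count_list ws T1"
  define s where "s = count_list ws T2"
  show ?thesis
  proof (cases n)
    case 0
    then show ?thesis
      by (simp add: forest_mass_def forest_coeff_Suc_left r_def[symmetric] s_def[symmetric])
  next
    case Suc
    then show ?thesis
      by (simp add: forest_mass_def forest_coeff_Suc_left r_def[symmetric] s_def[symmetric]
          algebra_simps)
  qed
qed

lemma forest_mass_Cons_T2:
  "reduced_leaf_prob T2 * forest_mass ws n m
     + (if m \<ge> 1 then (1 - reduced_leaf_prob T2) * forest_mass (T1 # T2 # ws) n (m - 1) else 0)
     = forest_mass (T2 # ws) n m"
proof -
  define r where "r = count_list ws T1"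
  define s where "s = count_list ws T2"
  show ?thesis
  proof (cases m)
    case 0
    then show ?thesis
      by (simp add: forest_mass_def forest_coeff_Suc_right r_def[symmetric] s_def[symmetric])
  next
    case Suc
    then show ?thesis
      by (simp add: forest_mass_def forest_coeff_Suc_right r_def[symmetric] s_def[symmetric]
          algebra_simps)
  qed
qed

lemma forest_mass_Cons:
  "(leaf_prob w * forest_mass ws n m
     + (if of_bool (w = T1) \<le> n \<and> of_bool (w = T2) \<le> m
        then father_prob w
          * forest_mass (T1 # T2 # ws) (n - of_bool (w = T1)) (m - of_bool (w = T2))
        else 0))
   / (1 - unary_prob w) = forest_mass (w # ws) n m"
  (is "?lhs = _")
proof (cases w)
  case T1
  then have "?lhs = reduced_leaf_prob T1 * forest_mass ws n m
      + (if n \<ge> 1 then (1 - reduced_leaf_prob T1) * forest_mass (T1 # T2 # ws) (n - 1) m else 0)"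
    by (simp add: add_divide_distrib conditional_probs flip: times_divide_eq_left)
  also have "\<dots> = forest_mass (w # ws) n m"
    unfolding T1 by (rule forest_mass_Cons_T1)
  finally show ?thesis .
next
  case T2
  then have "?lhs = reduced_leaf_prob T2 * forest_mass ws n m
      + (if m \<ge> 1 then (1 - reduced_leaf_prob T2) * forest_mass (T1 # T2 # ws) n (m - 1) else 0)"
    by (simp add: add_divide_distrib conditional_probs flip: times_divide_eq_left)
  also have "\<dots> = forest_mass (w # ws) n m"
    unfolding T2 by (rule forest_mass_Cons_T2)
  finally show ?thesis .
qed

theorem has_sum_forests: "(forest_weight gw ws has_sum forest_mass ws n m) (forests ws n m)"
proof (induction "n + m" arbitrary: n m ws rule: less_induct)
  case less
  show ?case
  proof (induction ws)
    case Nil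
    have "((\<lambda>_. 1 :: real) has_sum 1) {[] :: btree_s list}"
      using has_sum_finite[of "{[] :: btree_s list}" "\<lambda>_. 1 :: real"] by simp
    then show ?case
      by (simp add: forests_Nil forest_mass_def forest_coeff_0_0)
  next
    case (Cons w ws)
    have "(forest_weight gw (T1 # T2 # ws) has_sum
        forest_mass (T1 # T2 # ws) (n - of_bool (w = T1)) (m - of_bool (w = T2)))
        (forests (T1 # T2 # ws) (n - of_bool (w = T1)) (m - of_bool (w = T2)))"
      if "of_bool (w = T1) \<le> n" "of_bool (w = T2) \<le> m"
      using that by (intro less) (cases w; auto)
    from has_sum_forests_unary_chains[OF has_sum_forests_first_not_unary[OF Cons this]]
    show ?case
      unfolding forest_mass_Cons .
  qed
qed

lemma has_sum_trees:
  assumes "n \<ge> 1"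
  shows "(gw T1 has_sum
           (let P = p0 / (p0 + p2); Q = q0 / (q0 + q2) in
              narayana (n + m) (m + 1) * P ^ (m + 1) * (1 - P) ^ n * Q ^ n * (1 - Q) ^ m))
         {t. fathers T1 T1 t = n \<and> fathers T2 T1 t = m}"
proof -
  have "(forest_weight gw [T1] has_sum forest_mass [T1] n m) (forests [T1] n m)"
    by (rule has_sum_forests)
  also have "?this \<longleftrightarrow>
      (gw T1 has_sum forest_mass [T1] n m) {t. fathers T1 T1 t = n \<and> fathers T2 T1 t = m}"
    by (rule has_sum_reindex_bij_witness[where i = "\<lambda>t. [t]" and j = hd])
       (auto simp: forests_def length_Suc_conv)
  also have "forest_mass [T1] n m = narayana (n + m) (m + 1) * reduced_leaf_prob T1 ^ (m + 1)
      * (1 - reduced_leaf_prob T1) ^ n * reduced_leaf_prob T2 ^ n * (1 - reduced_leaf_prob T2) ^ m"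
  proof -
    have "forest_coeff (count_list [T1] T1) (count_list [T1] T2) n m = narayana (n + m) (m + 1)"
      using forest_coeff_1_0[OF assms] by simp
    then show ?thesis
      unfolding forest_mass_def by (simp add: add.commute)
  qed
  finally show ?thesis
    unfolding reduced_leaf_prob_simps Let_def .
qed

end

theorem theorem4p1:
  fixes p0 p1 p2 q0 q1 q2 :: real and n m :: nat
  assumes "0 < p0" "p0 < 1" "0 < p1" "p1 < 1" "0 < p2" "p2 < 1"
    and "0 < q0" "q0 < 1" "0 < q1" "q1 < 1" "0 < q2" "q2 < 1"
    and "p0 + p1 + p2 = 1" "q0 + q1 + q2 = 1"
    and finite_as: "(gw_weight p0 p1 p2 q0 q1 q2 T1 has_sum 1) UNIV"
    and "n \<ge> 1"
  shows "(gw_weight p0 p1 p2 q0 q1 q2 T1 has_sum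
           (let P = p0 / (p0 + p2); Q = q0 / (q0 + q2) in
              narayana (n + m) (m + 1) * P ^ (m + 1) * (1 - P) ^ n * Q ^ n * (1 - Q) ^ m))
         {t. fathers T1 T1 t = n \<and> fathers T2 T1 t = m}"
proof (rule gw_offspring.has_sum_trees)
  show "gw_offspring p0 p1 p2 q0 q1 q2"
    using assms by unfold_locales auto
qed (use assms in auto)

end
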